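(* Let $(A,\mu,\Delta,\alpha)$ be an infinitesimal Hom-bialgebra and define $x\bullet y=\alpha(y_1)(\alpha(x)y_2)$ (which equals $(y_1\alpha(x))\alpha(y_2)$) for $x,y\in A$. Then $(A,\bullet,\alpha^3)$ is a left Hom-pre-Lie algebra.
   Context: Notation $\mu(a\otimes b)=ab$, $\Delta(a)=a_1\otimes a_2$. An infinitesimal Hom-bialgebra $(A,\mu,\Delta,\alpha)$: $\alpha$ linear with $\alpha(xy)=\alpha(x)\alpha(y)$ and $\alpha(x)(yz)=(xy)\alpha(z)$; $(\alpha\otimes\alpha)\circ\Delta=\Delta\circ\alpha$ and $(\Delta\otimes\alpha)\circ\Delta=(\alpha\otimes\Delta)\circ\Delta$; and $\Delta(ab)=\alpha(a)b_1\otimes\alpha(b_2)+\alpha(a_1)\otimes a_2\alpha(b)$ for all $a,b$. A left Hom-pre-Lie algebra $(A,\cdot,\gamma)$: $\gamma(x\cdot y)=\gamma(x)\cdot\gamma(y)$ and $\gamma(x)\cdot(y\cdot z)-(x\cdot y)\cdot\gamma(z)=\gamma(y)\cdot(x\cdot z)-(y\cdot x)\cdot\gamma(z)$ for all $x,y,z$. *)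

theory Defs
  imports Complex_Main
begin

text \<open>Tensors in A (x) A (resp. A (x) A (x) A) are represented as finite sums of simple tensors,
  i.e. lists of pairs (resp. triples).  Two such tensors are equal iff they agree under every
  bilinear (resp. trilinear) form into the ground field (universal property of the tensor
  product; over a field, scalar-valued multilinear forms separate tensors).\<close>

definition bilinear_form :: "('k::field \<Rightarrow> 'a::ab_group_add \<Rightarrow> 'a) \<Rightarrow> ('a \<Rightarrow> 'a \<Rightarrow> 'k) \<Rightarrow> bool" where
  "bilinear_form sc B \<longleftrightarrow>
     (\<forall>x. Vector_Spaces.linear sc (*) (B x)) \<and> (\<forall>y. Vector_Spaces.linear sc (*) (\<lambda>x. B x y))"

definition trilinear_form :: "('k::field \<Rightarrow> 'a::ab_group_add \<Rightarrow> 'a) \<Rightarrow> ('a \<Rightarrow> 'a \<Rightarrow> 'a \<Rightarrow> 'k) \<Rightarrow> bool" where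
  "trilinear_form sc T \<longleftrightarrow>
     (\<forall>y z. Vector_Spaces.linear sc (*) (\<lambda>x. T x y z)) \<and>
     (\<forall>x z. Vector_Spaces.linear sc (*) (\<lambda>y. T x y z)) \<and>
     (\<forall>x y. Vector_Spaces.linear sc (*) (\<lambda>z. T x y z))"

definition tensor2_eq :: "('k::field \<Rightarrow> 'a::ab_group_add \<Rightarrow> 'a) \<Rightarrow> ('a \<times> 'a) list \<Rightarrow> ('a \<times> 'a) list \<Rightarrow> bool" where
  "tensor2_eq sc s t \<longleftrightarrow> (\<forall>B. bilinear_form sc B \<longrightarrow>
     sum_list (map (\<lambda>(x, y). B x y) s) = sum_list (map (\<lambda>(x, y). B x y) t))"

definition tensor3_eq :: "('k::field \<Rightarrow> 'a::ab_group_add \<Rightarrow> 'a) \<Rightarrow> ('a \<times> 'a \<times> 'a) list \<Rightarrow> ('a \<times> 'a \<times> 'a) list \<Rightarrow> bool" where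
  "tensor3_eq sc s t \<longleftrightarrow> (\<forall>T. trilinear_form sc T \<longrightarrow>
     sum_list (map (\<lambda>(x, y, z). T x y z) s) = sum_list (map (\<lambda>(x, y, z). T x y z) t))"

definition coprod_linear :: "('k::field \<Rightarrow> 'a::ab_group_add \<Rightarrow> 'a) \<Rightarrow> ('a \<Rightarrow> ('a \<times> 'a) list) \<Rightarrow> bool" where
  "coprod_linear sc D \<longleftrightarrow> (\<forall>c a b.
     tensor2_eq sc (D (sc c a + b)) (map (\<lambda>(x, y). (sc c x, y)) (D a) @ D b))"

definition infinitesimal_hom_bialgebra ::
  "('k::field \<Rightarrow> 'a::ab_group_add \<Rightarrow> 'a) \<Rightarrow> ('a \<Rightarrow> 'a \<Rightarrow> 'a) \<Rightarrow> ('a \<Rightarrow> ('a \<times> 'a) list) \<Rightarrow> ('a \<Rightarrow> 'a) \<Rightarrow> bool" where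
  "infinitesimal_hom_bialgebra sc mu D \<alpha> \<longleftrightarrow>
     vector_space sc \<and>
     (\<forall>x. Vector_Spaces.linear sc sc (mu x)) \<and> (\<forall>y. Vector_Spaces.linear sc sc (\<lambda>x. mu x y)) \<and>
     Vector_Spaces.linear sc sc \<alpha> \<and>
     coprod_linear sc D \<and>
     (\<forall>x y. \<alpha> (mu x y) = mu (\<alpha> x) (\<alpha> y)) \<and>
     (\<forall>x y z. mu (\<alpha> x) (mu y z) = mu (mu x y) (\<alpha> z)) \<and>
     (\<forall>a. tensor2_eq sc (map (\<lambda>(x, y). (\<alpha> x, \<alpha> y)) (D a)) (D (\<alpha> a))) \<and>
     (\<forall>a. tensor3_eq sc
        (concat (map (\<lambda>(x, y). map (\<lambda>(u, v). (u, v, \<alpha> y)) (D x)) (D a)))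
        (concat (map (\<lambda>(x, y). map (\<lambda>(u, v). (\<alpha> x, u, v)) (D y)) (D a)))) \<and>
     (\<forall>a b. tensor2_eq sc (D (mu a b))
        (map (\<lambda>(x, y). (mu (\<alpha> a) x, \<alpha> y)) (D b) @ map (\<lambda>(x, y). (\<alpha> x, mu y (\<alpha> b))) (D a)))"

definition left_hom_pre_lie :: "('a::ab_group_add \<Rightarrow> 'a \<Rightarrow> 'a) \<Rightarrow> ('a \<Rightarrow> 'a) \<Rightarrow> bool" where
  "left_hom_pre_lie m \<gamma> \<longleftrightarrow>
     (\<forall>x y. \<gamma> (m x y) = m (\<gamma> x) (\<gamma> y)) \<and>
     (\<forall>x y z. m (\<gamma> x) (m y z) - m (m x y) (\<gamma> z) = m (\<gamma> y) (m x z) - m (m y x) (\<gamma> z))"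

text \<open>x \<bullet> y = \<alpha>(y_1) (\<alpha>(x) y_2), computed on the chosen representative of Delta y.\<close>
definition hbullet :: "('a::ab_group_add \<Rightarrow> 'a \<Rightarrow> 'a) \<Rightarrow> ('a \<Rightarrow> ('a \<times> 'a) list) \<Rightarrow> ('a \<Rightarrow> 'a) \<Rightarrow> 'a \<Rightarrow> 'a \<Rightarrow> 'a" where
  "hbullet mu D \<alpha> x y = sum_list (map (\<lambda>(y1, y2). mu (\<alpha> y1) (mu (\<alpha> x) y2)) (D y))"

end

theory Submission
  imports Defs
begin

text \<open>The coproduct is only given up to equality of tensors, so every identity in \<open>A\<close> is tested
  against linear functionals \<open>\<phi>\<close>, which separate points; \<open>\<phi>\<close> applied to a product then becomes a
  bilinear (or trilinear) form evaluated on a coproduct, to which the axioms of \<open>\<Delta>\<close> apply.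
  Multiplicativity of \<open>\<alpha>\<^sup>3\<close> holds because \<open>\<alpha>\<close> commutes with \<open>\<mu>\<close> and \<open>\<Delta>\<close>.
  For the pre-Lie identity, expand \<open>\<alpha>\<^sup>3(x) \<bullet> (y \<bullet> z) = \<Sum> \<alpha>(w\<^sub>1)(\<alpha>\<^sup>4(x) w\<^sub>2)\<close> with
  \<open>w = \<alpha>(z\<^sub>1)(\<alpha>(y) z\<^sub>2)\<close> by the derivation rule for \<open>\<Delta>\<close>, applied twice. Of the three resulting
  terms one is \<open>(x \<bullet> y) \<bullet> \<alpha>\<^sup>3(z)\<close>; after Hom-associativity and Hom-coassociativity the other two are
  \<open>S(x,y)\<close> and \<open>S(y,x)\<close>, where \<open>S(x,y) = \<Sum> \<alpha>\<^sup>3(z\<^sub>1\<^sub>1)(\<alpha>\<^sup>4(x)(\<alpha>(z\<^sub>1\<^sub>2)(\<alpha>\<^sup>2(y) \<alpha>(z\<^sub>2))))\<close>.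
  Hence the Hom-associator \<open>\<alpha>\<^sup>3(x) \<bullet> (y \<bullet> z) - (x \<bullet> y) \<bullet> \<alpha>\<^sup>3(z)\<close> is symmetric in \<open>x\<close> and \<open>y\<close>.\<close>

lemma vector_space_field_mult: "vector_space ((*) :: 'k::field \<Rightarrow> 'k \<Rightarrow> 'k)"
  by unfold_locales (auto simp: algebra_simps)

lemma linear_sum_list:
  assumes "Vector_Spaces.linear s1 s2 f"
  shows "f (sum_list xs) = sum_list (map f xs)"
proof -
  interpret Vector_Spaces.linear s1 s2 f by fact
  show ?thesis by (induction xs) (simp_all add: zero add)
qed

lemma linear_functionals_separate:
  fixes sc :: "'k::field \<Rightarrow> 'a::ab_group_add \<Rightarrow> 'a"
  assumes "vector_space sc"
    and separated: "\<And>\<phi>. Vector_Spaces.linear sc (*) \<phi> \<Longrightarrow> \<phi> p = \<phi> q"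
  shows "p = q"
proof (rule ccontr)
  assume "p \<noteq> q"
  interpret vector_space_pair sc "(*) :: 'k \<Rightarrow> 'k \<Rightarrow> 'k"
    using assms(1) vector_space_field_mult by (simp add: vector_space_pair_def)
  have "vs1.independent {p - q}"
    using \<open>p \<noteq> q\<close> by (simp add: vs1.independent_insert vs1.span_empty)
  then obtain g where g: "Vector_Spaces.linear sc (*) g" "g (p - q) = 1"
    using linear_independent_extend[of "{p - q}" "\<lambda>_. 1"] by auto
  then have "g p - g q = 1"
    by (simp add: linear_diff)
  with separated[OF g(1)] show False by simp
qed

lemma bilinear_formI:
  assumes "vector_space sc"
    and "\<And>a b y. B (a + b) y = B a y + B b y" "\<And>c a y. B (sc c a) y = c * B a y"
    and "\<And>a b y. B y (a + b) = B y a + B y b" "\<And>c a y. B y (sc c a) = c * B y a"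
  shows "bilinear_form sc B"
  using assms vector_space_field_mult
  by (simp add: bilinear_form_def Vector_Spaces.linear_iff)

lemma bilinear_form_compose:
  "bilinear_form sc B \<Longrightarrow> Vector_Spaces.linear sc sc f \<Longrightarrow> Vector_Spaces.linear sc sc g \<Longrightarrow>
   bilinear_form sc (\<lambda>u v. B (f u) (g v))"
  unfolding bilinear_form_def using Vector_Spaces.linear_compose[unfolded o_def] by blast

lemma trilinear_formI:
  assumes "vector_space sc"
    and "\<And>a b y z. T (a + b) y z = T a y z + T b y z" "\<And>c a y z. T (sc c a) y z = c * T a y z"
    and "\<And>a b y z. T y (a + b) z = T y a z + T y b z" "\<And>c a y z. T y (sc c a) z = c * T y a z"
    and "\<And>a b y z. T y z (a + b) = T y z a + T y z b" "\<And>c a y z. T y z (sc c a) = c * T y z a"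
  shows "trilinear_form sc T"
  using assms vector_space_field_mult
  by (simp add: trilinear_form_def Vector_Spaces.linear_iff)

definition tensor2_eval :: "('a \<Rightarrow> 'b \<Rightarrow> 'k::comm_monoid_add) \<Rightarrow> ('a \<times> 'b) list \<Rightarrow> 'k" where
  "tensor2_eval B t = (\<Sum>(x, y)\<leftarrow>t. B x y)"

lemma tensor2_eval_simps [simp]:
  "tensor2_eval B [] = 0"
  "tensor2_eval B ((x, y) # t) = B x y + tensor2_eval B t"
  "tensor2_eval B (s @ t) = tensor2_eval B s + tensor2_eval B t"
  by (simp_all add: tensor2_eval_def)

lemma tensor2_eval_map_pair [simp]:
  "tensor2_eval B (map (\<lambda>(x, y). (f x, g y)) t) = tensor2_eval (\<lambda>x y. B (f x) (g y)) t"
  by (induction t) auto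

lemma tensor2_eq_eval:
  "tensor2_eq sc s t \<Longrightarrow> bilinear_form sc B \<Longrightarrow> tensor2_eval B s = tensor2_eval B t"
  unfolding tensor2_eq_def tensor2_eval_def by blast

lemma tensor3_eq_eval_iterated:
  assumes "tensor3_eq sc
      (concat (map (\<lambda>(x, y). map (\<lambda>(u, v). (u, v, g y)) (D x)) l))
      (concat (map (\<lambda>(x, y). map (\<lambda>(u, v). (h x, u, v)) (D y)) l))"
    and "trilinear_form sc T"
  shows "(\<Sum>(x, y)\<leftarrow>l. tensor2_eval (\<lambda>u v. T u v (g y)) (D x))
       = (\<Sum>(x, y)\<leftarrow>l. tensor2_eval (\<lambda>u v. T (h x) u v) (D y))"
proof -
  have "(\<Sum>(u, v, w)\<leftarrow>concat (map (\<lambda>(x, y). map (\<lambda>(u, v). (u, v, g y)) (D x)) l). T u v w)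
      = (\<Sum>(x, y)\<leftarrow>l. tensor2_eval (\<lambda>u v. T u v (g y)) (D x))"
    by (induction l) (auto simp: tensor2_eval_def case_prod_unfold o_def)
  moreover have "(\<Sum>(u, v, w)\<leftarrow>concat (map (\<lambda>(x, y). map (\<lambda>(u, v). (h x, u, v)) (D y)) l). T u v w)
      = (\<Sum>(x, y)\<leftarrow>l. tensor2_eval (\<lambda>u v. T (h x) u v) (D y))"
    by (induction l) (auto simp: tensor2_eval_def case_prod_unfold o_def)
  ultimately show ?thesis
    using assms unfolding tensor3_eq_def by metis
qed

locale inf_hom_bialgebra =
  fixes sc :: "'k::field \<Rightarrow> 'a::ab_group_add \<Rightarrow> 'a"
    and mu :: "'a \<Rightarrow> 'a \<Rightarrow> 'a"  (infixl \<open>\<cdot>\<close> 70)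
    and D :: "'a \<Rightarrow> ('a \<times> 'a) list"
    and \<alpha> :: "'a \<Rightarrow> 'a"
  assumes inf_hom_bialgebra: "infinitesimal_hom_bialgebra sc mu D \<alpha>"
begin

abbreviation bullet :: "'a \<Rightarrow> 'a \<Rightarrow> 'a"  (infixl \<open>\<bullet>\<close> 70)
  where "x \<bullet> y \<equiv> hbullet mu D \<alpha> x y"

lemma vector_space: "vector_space sc"
  and linear_mult_left: "Vector_Spaces.linear sc sc (\<lambda>x. x \<cdot> y)"
  and linear_mult_right: "Vector_Spaces.linear sc sc (\<lambda>y. x \<cdot> y)"
  and linear_alpha: "Vector_Spaces.linear sc sc \<alpha>"
  and alpha_mult [simp]: "\<alpha> (x \<cdot> y) = \<alpha> x \<cdot> \<alpha> y"
  and hom_assoc: "\<alpha> x \<cdot> (y \<cdot> z) = (x \<cdot> y) \<cdot> \<alpha> z"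
  using inf_hom_bialgebra by (simp_all add: infinitesimal_hom_bialgebra_def)

lemma mult_add_left [simp]: "(a + b) \<cdot> c = a \<cdot> c + b \<cdot> c"
  and mult_add_right [simp]: "c \<cdot> (a + b) = c \<cdot> a + c \<cdot> b"
  and mult_scale_left [simp]: "sc k a \<cdot> c = sc k (a \<cdot> c)"
  and mult_scale_right [simp]: "c \<cdot> sc k a = sc k (c \<cdot> a)"
  and alpha_add [simp]: "\<alpha> (a + b) = \<alpha> a + \<alpha> b"
  and alpha_scale [simp]: "\<alpha> (sc k a) = sc k (\<alpha> a)"
  using linear_mult_left[of c] linear_mult_right[of c] linear_alpha
  by (simp_all add: Vector_Spaces.linear_iff)

lemma mult_sum_list_left: "sum_list xs \<cdot> c = (\<Sum>x\<leftarrow>xs. x \<cdot> c)"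
  and mult_sum_list_right: "c \<cdot> sum_list xs = (\<Sum>x\<leftarrow>xs. c \<cdot> x)"
  and alpha_sum_list: "\<alpha> (sum_list xs) = (\<Sum>x\<leftarrow>xs. \<alpha> x)"
  by (rule linear_sum_list, rule linear_mult_left linear_mult_right linear_alpha)+

lemma bilinear_form_mult:
  "Vector_Spaces.linear sc (*) \<phi> \<Longrightarrow> bilinear_form sc (\<lambda>u v. \<phi> (u \<cdot> v))"
  by (rule bilinear_formI[OF vector_space]) (simp_all add: Vector_Spaces.linear_iff)

lemma coprod_eval_add:
  assumes "bilinear_form sc B"
  shows "tensor2_eval B (D (a + b)) = tensor2_eval B (D a) + tensor2_eval B (D b)"
proof -
  have "tensor2_eq sc (D (sc 1 a + b)) (map (\<lambda>(x, y). (sc 1 x, y)) (D a) @ D b)"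
    using inf_hom_bialgebra by (simp add: infinitesimal_hom_bialgebra_def coprod_linear_def)
  with tensor2_eq_eval[OF _ assms] show ?thesis
    using vector_space.vector_space_assms(4)[OF vector_space] by simp
qed

lemma coprod_eval_sum_list:
  assumes "bilinear_form sc B"
  shows "tensor2_eval B (D (sum_list xs)) = (\<Sum>x\<leftarrow>xs. tensor2_eval B (D x))"
proof -
  have "tensor2_eval B (D 0) = 0"
    using coprod_eval_add[OF assms, of 0 0] by (metis add.right_neutral add_left_cancel)
  then show ?thesis
    by (induction xs) (simp_all add: coprod_eval_add[OF assms])
qed

lemma coprod_eval_alpha:
  "bilinear_form sc B \<Longrightarrow> tensor2_eval B (D (\<alpha> a)) = tensor2_eval (\<lambda>u v. B (\<alpha> u) (\<alpha> v)) (D a)"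
  using inf_hom_bialgebra tensor2_eq_eval[of sc "map (\<lambda>(x, y). (\<alpha> x, \<alpha> y)) (D a)" "D (\<alpha> a)" B]
  by (simp add: infinitesimal_hom_bialgebra_def)

lemma coprod_eval_mult:
  "bilinear_form sc B \<Longrightarrow> tensor2_eval B (D (a \<cdot> b))
     = tensor2_eval (\<lambda>u v. B (\<alpha> a \<cdot> u) (\<alpha> v)) (D b) + tensor2_eval (\<lambda>u v. B (\<alpha> u) (v \<cdot> \<alpha> b)) (D a)"
  using inf_hom_bialgebra
    tensor2_eq_eval[of sc "D (a \<cdot> b)"
      "map (\<lambda>(x, y). (\<alpha> a \<cdot> x, \<alpha> y)) (D b) @ map (\<lambda>(x, y). (\<alpha> x, y \<cdot> \<alpha> b)) (D a)" B]
  by (simp add: infinitesimal_hom_bialgebra_def)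

lemma coprod_eval_coassoc:
  "trilinear_form sc T \<Longrightarrow>
     (\<Sum>(a1, a2)\<leftarrow>D a. tensor2_eval (\<lambda>u v. T u v (\<alpha> a2)) (D a1))
   = (\<Sum>(a1, a2)\<leftarrow>D a. tensor2_eval (\<lambda>u v. T (\<alpha> a1) u v) (D a2))"
  using inf_hom_bialgebra tensor3_eq_eval_iterated[of sc \<alpha> D "D a" \<alpha> T]
  by (simp add: infinitesimal_hom_bialgebra_def)

lemma functional_bullet:
  "Vector_Spaces.linear sc (*) \<phi> \<Longrightarrow> \<phi> (x \<bullet> y) = tensor2_eval (\<lambda>u v. \<phi> (\<alpha> u \<cdot> (\<alpha> x \<cdot> v))) (D y)"
  by (simp add: hbullet_def tensor2_eval_def linear_sum_list o_def case_prod_unfold)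

lemma bilinear_form_bullet_summand:
  "Vector_Spaces.linear sc (*) \<phi> \<Longrightarrow> bilinear_form sc (\<lambda>u v. \<phi> (\<alpha> u \<cdot> (c \<cdot> v)))"
  using bilinear_form_compose[OF bilinear_form_mult linear_alpha linear_mult_right] .

definition half_associator_form :: "('a \<Rightarrow> 'k) \<Rightarrow> 'a \<Rightarrow> 'a \<Rightarrow> 'a \<Rightarrow> 'a \<Rightarrow> 'a \<Rightarrow> 'k" where
  "half_associator_form \<phi> x y p q r = \<phi> (\<alpha>(\<alpha>(\<alpha> p)) \<cdot> (\<alpha>(\<alpha>(\<alpha>(\<alpha> x))) \<cdot> (\<alpha> q \<cdot> (\<alpha>(\<alpha> y) \<cdot> r))))"

lemma trilinear_half_associator_form:
  "Vector_Spaces.linear sc (*) \<phi> \<Longrightarrow> trilinear_form sc (half_associator_form \<phi> x y)"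
  by (rule trilinear_formI[OF vector_space])
    (simp_all add: half_associator_form_def Vector_Spaces.linear_iff)

lemma coprod_eval_bullet_summand:
  assumes lf: "Vector_Spaces.linear sc (*) \<phi>"
  shows "tensor2_eval (\<lambda>u v. \<phi> (\<alpha> u \<cdot> (\<alpha>(\<alpha>(\<alpha>(\<alpha> x))) \<cdot> v))) (D (\<alpha> z1 \<cdot> (\<alpha> y \<cdot> z2)))
     = tensor2_eval (half_associator_form \<phi> y x (\<alpha> z1)) (D z2)
       + tensor2_eval (\<lambda>u v. \<phi> (\<alpha>(\<alpha>(\<alpha>(\<alpha> z1))) \<cdot> ((\<alpha>(\<alpha> u) \<cdot> (\<alpha>(\<alpha> x) \<cdot> \<alpha> v)) \<cdot> \<alpha>(\<alpha>(\<alpha> z2))))) (D y)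
       + tensor2_eval (\<lambda>u v. half_associator_form \<phi> x y u v (\<alpha> z2)) (D z1)"
proof -
  have B: "bilinear_form sc (\<lambda>u v. \<phi> (\<alpha> u \<cdot> (\<alpha>(\<alpha>(\<alpha>(\<alpha> x))) \<cdot> v)))"
    using bilinear_form_bullet_summand[OF lf] .
  note B_left = bilinear_form_compose[OF B linear_mult_right linear_alpha]
  note B_right = bilinear_form_compose[OF B linear_alpha linear_mult_left]
  note B_left_right = bilinear_form_compose[OF B_left linear_alpha linear_mult_left]
  have reassoc_half_associator:
    "(\<alpha>(\<alpha>(\<alpha> p)) \<cdot> (\<alpha>(\<alpha>(\<alpha> y)) \<cdot> \<alpha> q)) \<cdot> (\<alpha>(\<alpha>(\<alpha>(\<alpha> x))) \<cdot> \<alpha>(\<alpha> r))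
     = \<alpha>(\<alpha>(\<alpha>(\<alpha> p))) \<cdot> (\<alpha>(\<alpha>(\<alpha>(\<alpha> y))) \<cdot> (\<alpha> q \<cdot> (\<alpha>(\<alpha> x) \<cdot> r)))" for p q r
    using hom_assoc[of "\<alpha>(\<alpha>(\<alpha> p))" "\<alpha>(\<alpha>(\<alpha> y)) \<cdot> \<alpha> q" "\<alpha>(\<alpha>(\<alpha> x)) \<cdot> \<alpha> r"]
      hom_assoc[of "\<alpha>(\<alpha>(\<alpha> y))" "\<alpha> q" "\<alpha>(\<alpha> x) \<cdot> r"] by simp
  have reassoc_iterated_bullet:
    "(\<alpha>(\<alpha>(\<alpha> a)) \<cdot> \<alpha>(\<alpha>(\<alpha> b))) \<cdot> (\<alpha>(\<alpha>(\<alpha>(\<alpha> c))) \<cdot> (\<alpha>(\<alpha> d) \<cdot> \<alpha>(\<alpha> e)))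
     = \<alpha>(\<alpha>(\<alpha>(\<alpha> a))) \<cdot> ((\<alpha>(\<alpha> b) \<cdot> (\<alpha>(\<alpha> c) \<cdot> \<alpha> d)) \<cdot> \<alpha>(\<alpha>(\<alpha> e)))" for a b c d e
  proof -
    have "(\<alpha>(\<alpha>(\<alpha> a)) \<cdot> \<alpha>(\<alpha>(\<alpha> b))) \<cdot> (\<alpha>(\<alpha>(\<alpha>(\<alpha> c))) \<cdot> (\<alpha>(\<alpha> d) \<cdot> \<alpha>(\<alpha> e)))
       = \<alpha>(\<alpha>(\<alpha>(\<alpha> a))) \<cdot> (\<alpha>(\<alpha>(\<alpha> b)) \<cdot> (\<alpha>(\<alpha>(\<alpha> c)) \<cdot> (\<alpha> d \<cdot> \<alpha> e)))"
      using hom_assoc[of "\<alpha>(\<alpha>(\<alpha> a))" "\<alpha>(\<alpha>(\<alpha> b))" "\<alpha>(\<alpha>(\<alpha> c)) \<cdot> (\<alpha> d \<cdot> \<alpha> e)"] by simp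
    also have "\<alpha>(\<alpha>(\<alpha> c)) \<cdot> (\<alpha> d \<cdot> \<alpha> e) = (\<alpha>(\<alpha> c) \<cdot> \<alpha> d) \<cdot> \<alpha>(\<alpha> e)"
      by (rule hom_assoc)
    also have "\<alpha>(\<alpha>(\<alpha> b)) \<cdot> ((\<alpha>(\<alpha> c) \<cdot> \<alpha> d) \<cdot> \<alpha>(\<alpha> e))
             = (\<alpha>(\<alpha> b) \<cdot> (\<alpha>(\<alpha> c) \<cdot> \<alpha> d)) \<cdot> \<alpha>(\<alpha>(\<alpha> e))"
      by (rule hom_assoc)
    finally show ?thesis .
  qed
  show ?thesis
    unfolding coprod_eval_mult[OF B] coprod_eval_mult[OF B_left]
      coprod_eval_alpha[OF B_left_right] coprod_eval_alpha[OF B_right]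
    by (simp add: half_associator_form_def[abs_def] reassoc_half_associator reassoc_iterated_bullet add_ac)
qed

lemma functional_bullet_alpha3:
  assumes lf: "Vector_Spaces.linear sc (*) \<phi>"
  shows "\<phi> (w \<bullet> \<alpha>(\<alpha>(\<alpha> z))) = (\<Sum>(z1, z2)\<leftarrow>D z. \<phi> (\<alpha>(\<alpha>(\<alpha>(\<alpha> z1))) \<cdot> (\<alpha> w \<cdot> \<alpha>(\<alpha>(\<alpha> z2)))))"
proof -
  note B = bilinear_form_bullet_summand[OF lf]
  note B_alpha = bilinear_form_compose[OF B linear_alpha linear_alpha]
  note B_alpha2 = bilinear_form_compose[OF B_alpha linear_alpha linear_alpha]
  show ?thesis
    unfolding functional_bullet[OF lf] coprod_eval_alpha[OF B_alpha2] coprod_eval_alpha[OF B_alpha]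
      coprod_eval_alpha[OF B]
    by (simp add: tensor2_eval_def case_prod_unfold)
qed

lemma functional_bullet_alpha3_right:
  assumes lf: "Vector_Spaces.linear sc (*) \<phi>"
  shows "\<phi> ((x \<bullet> y) \<bullet> \<alpha>(\<alpha>(\<alpha> z)))
    = (\<Sum>(z1, z2)\<leftarrow>D z. tensor2_eval
        (\<lambda>u v. \<phi> (\<alpha>(\<alpha>(\<alpha>(\<alpha> z1))) \<cdot> ((\<alpha>(\<alpha> u) \<cdot> (\<alpha>(\<alpha> x) \<cdot> \<alpha> v)) \<cdot> \<alpha>(\<alpha>(\<alpha> z2))))) (D y))"
  unfolding functional_bullet_alpha3[OF lf]
  by (simp add: hbullet_def tensor2_eval_def alpha_sum_list mult_sum_list_left mult_sum_list_right
      linear_sum_list[OF lf] o_def case_prod_unfold)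

lemma functional_bullet_associator:
  assumes lf: "Vector_Spaces.linear sc (*) \<phi>"
  shows "\<phi> (\<alpha>(\<alpha>(\<alpha> x)) \<bullet> (y \<bullet> z))
       = \<phi> ((x \<bullet> y) \<bullet> \<alpha>(\<alpha>(\<alpha> z)))
         + (\<Sum>(z1, z2)\<leftarrow>D z. tensor2_eval (\<lambda>u v. half_associator_form \<phi> x y u v (\<alpha> z2)) (D z1))
         + (\<Sum>(z1, z2)\<leftarrow>D z. tensor2_eval (\<lambda>u v. half_associator_form \<phi> y x u v (\<alpha> z2)) (D z1))"
proof -
  have "\<phi> (\<alpha>(\<alpha>(\<alpha> x)) \<bullet> (y \<bullet> z))
      = (\<Sum>(z1, z2)\<leftarrow>D z. tensor2_eval (\<lambda>u v. \<phi> (\<alpha> u \<cdot> (\<alpha>(\<alpha>(\<alpha>(\<alpha> x))) \<cdot> v)))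
           (D (\<alpha> z1 \<cdot> (\<alpha> y \<cdot> z2))))"
    unfolding functional_bullet[OF lf]
    by (simp add: hbullet_def coprod_eval_sum_list[OF bilinear_form_bullet_summand[OF lf]]
        o_def case_prod_unfold)
  moreover have "(\<Sum>(z1, z2)\<leftarrow>D z. tensor2_eval (half_associator_form \<phi> y x (\<alpha> z1)) (D z2))
      = (\<Sum>(z1, z2)\<leftarrow>D z. tensor2_eval (\<lambda>u v. half_associator_form \<phi> y x u v (\<alpha> z2)) (D z1))"
    using coprod_eval_coassoc[OF trilinear_half_associator_form[OF lf, of y x], of z] by simp
  ultimately show ?thesis
    unfolding coprod_eval_bullet_summand[OF lf] functional_bullet_alpha3_right[OF lf]
    by (simp add: sum_list_addf case_prod_unfold add_ac)
qed

lemma alpha3_bullet: "\<alpha>(\<alpha>(\<alpha> (x \<bullet> y))) = \<alpha>(\<alpha>(\<alpha> x)) \<bullet> \<alpha>(\<alpha>(\<alpha> y))"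
proof (rule linear_functionals_separate[OF vector_space])
  fix \<phi> :: "'a \<Rightarrow> 'k"
  assume lf: "Vector_Spaces.linear sc (*) \<phi>"
  show "\<phi> (\<alpha>(\<alpha>(\<alpha> (x \<bullet> y)))) = \<phi> (\<alpha>(\<alpha>(\<alpha> x)) \<bullet> \<alpha>(\<alpha>(\<alpha> y)))"
    unfolding functional_bullet_alpha3[OF lf]
    by (simp add: hbullet_def alpha_sum_list linear_sum_list[OF lf] o_def case_prod_unfold)
qed

lemma bullet_associator_symmetric:
  "\<alpha>(\<alpha>(\<alpha> x)) \<bullet> (y \<bullet> z) - (x \<bullet> y) \<bullet> \<alpha>(\<alpha>(\<alpha> z))
 = \<alpha>(\<alpha>(\<alpha> y)) \<bullet> (x \<bullet> z) - (y \<bullet> x) \<bullet> \<alpha>(\<alpha>(\<alpha> z))"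
proof (rule linear_functionals_separate[OF vector_space])
  fix \<phi> :: "'a \<Rightarrow> 'k"
  assume lf: "Vector_Spaces.linear sc (*) \<phi>"
  interpret \<phi>: Vector_Spaces.linear sc "(*)" \<phi> by (fact lf)
  show "\<phi> (\<alpha>(\<alpha>(\<alpha> x)) \<bullet> (y \<bullet> z) - (x \<bullet> y) \<bullet> \<alpha>(\<alpha>(\<alpha> z)))
      = \<phi> (\<alpha>(\<alpha>(\<alpha> y)) \<bullet> (x \<bullet> z) - (y \<bullet> x) \<bullet> \<alpha>(\<alpha>(\<alpha> z)))"
    by (simp add: \<phi>.diff functional_bullet_associator[OF lf])
qed

end

theorem mainTheorem13:
  fixes sc :: "'k::field \<Rightarrow> 'a::ab_group_add \<Rightarrow> 'a"
    and mu :: "'a \<Rightarrow> 'a \<Rightarrow> 'a"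
    and D :: "'a \<Rightarrow> ('a \<times> 'a) list"
    and \<alpha> :: "'a \<Rightarrow> 'a"
  assumes "infinitesimal_hom_bialgebra sc mu D \<alpha>"
  shows "left_hom_pre_lie (hbullet mu D \<alpha>) (\<alpha> \<circ> \<alpha> \<circ> \<alpha>)"
proof -
  interpret inf_hom_bialgebra sc mu D \<alpha> by (rule inf_hom_bialgebra.intro) fact
  show ?thesis
    unfolding left_hom_pre_lie_def o_def
    by (intro conjI allI alpha3_bullet bullet_associator_symmetric)
qed

end
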